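(* Let $\mathcal{X}$ be a set of feasible solutions and $f_1,\dots,f_m:\mathcal{X}\to\mathbb{R}$ objective functions, $\boldsymbol{f}=(f_1,\dots,f_m)$. Fix an integer $K\ge1$, a preference vector $\boldsymbol{\lambda}$ with $\lambda_i\ge0$, $\sum_{i=1}^m\lambda_i=1$, an ideal point $\boldsymbol{z}^*\in\mathbb{R}^m$, and smoothing parameters $\mu>0$, $\mu_1,\dots,\mu_m>0$. For $X_K=\{\boldsymbol{x}^{(1)},\dots,\boldsymbol{x}^{(K)}\}\subseteq\mathcal{X}$ define the smooth Tchebycheff set scalarization $$g^{(\mathrm{STCH\text{-}Set})}_{\mu,\{\mu_i\}}(X_K\mid\boldsymbol{\lambda})=\mu\log\left(\sum_{i=1}^m\exp\left(\frac{\lambda_i\left(-\mu_i\log\left(\sum_{k=1}^K e^{-f_i(\boldsymbol{x}^{(k)})/\mu_i}\right)-z_i^*\right)}{\mu}\right)\right).$$ Let $X^*_K$ be an optimal solution set, i.e. a minimizer of $g^{(\mathrm{STCH\text{-}Set})}_{\mu,\{\mu_i\}}(\cdot\mid\boldsymbol{\lambda})$ over all sets of $K$ solutions in $\mathcal{X}$. Then every solution in $X^*_K$ is weakly Pareto optimal for $\min_{\boldsymbol{x}\in\mathcal{X}}\boldsymbol{f}(\boldsymbol{x})$. In addition, every solution in $X^*_K$ is Pareto optimal for $\min_{\boldsymbol{x}\in\mathcal{X}}\boldsymbol{f}(\boldsymbol{x})$ if either (1) the optimal solution set $X^*_K$ is unique, or (2) all preference coefficients are positive ($\lambda_i>0$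 for all $i$).
   Context: $\boldsymbol{x}^{(a)}$ dominates $\boldsymbol{x}^{(b)}$ if $f_i(\boldsymbol{x}^{(a)})\le f_i(\boldsymbol{x}^{(b)})$ for all $i$ and $f_j(\boldsymbol{x}^{(a)})<f_j(\boldsymbol{x}^{(b)})$ for some $j$; $\boldsymbol{x}^{(a)}$ strictly dominates $\boldsymbol{x}^{(b)}$ if $f_i(\boldsymbol{x}^{(a)})<f_i(\boldsymbol{x}^{(b)})$ for all $i$. A solution $\boldsymbol{x}^*\in\mathcal{X}$ is Pareto optimal if no $\boldsymbol{x}\in\mathcal{X}$ dominates it, and weakly Pareto optimal if no $\boldsymbol{x}\in\mathcal{X}$ strictly dominates it. *)

theory Defs
  imports Complex_Main
begin

definition dominates :: "nat \<Rightarrow> (nat \<Rightarrow> 'a \<Rightarrow> real) \<Rightarrow> 'a \<Rightarrow> 'a \<Rightarrow> bool" where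
  "dominates m f xa xb \<longleftrightarrow>
     (\<forall>i\<in>{1..m}. f i xa \<le> f i xb) \<and> (\<exists>j\<in>{1..m}. f j xa < f j xb)"

definition strictly_dominates :: "nat \<Rightarrow> (nat \<Rightarrow> 'a \<Rightarrow> real) \<Rightarrow> 'a \<Rightarrow> 'a \<Rightarrow> bool" where
  "strictly_dominates m f xa xb \<longleftrightarrow> (\<forall>i\<in>{1..m}. f i xa < f i xb)"

definition pareto_optimal :: "'a set \<Rightarrow> nat \<Rightarrow> (nat \<Rightarrow> 'a \<Rightarrow> real) \<Rightarrow> 'a \<Rightarrow> bool" where
  "pareto_optimal X m f x \<longleftrightarrow> x \<in> X \<and> \<not> (\<exists>y\<in>X. dominates m f y x)"

definition weakly_pareto_optimal :: "'a set \<Rightarrow> nat \<Rightarrow> (nat \<Rightarrow> 'a \<Rightarrow> real) \<Rightarrow> 'a \<Rightarrow> bool" where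
  "weakly_pareto_optimal X m f x \<longleftrightarrow> x \<in> X \<and> \<not> (\<exists>y\<in>X. strictly_dominates m f y x)"

definition stch_set ::
  "nat \<Rightarrow> nat \<Rightarrow> (nat \<Rightarrow> 'a \<Rightarrow> real) \<Rightarrow> (nat \<Rightarrow> real) \<Rightarrow> (nat \<Rightarrow> real) \<Rightarrow> real
   \<Rightarrow> (nat \<Rightarrow> real) \<Rightarrow> (nat \<Rightarrow> 'a) \<Rightarrow> real" where
  "stch_set m K f lam z mu mus xs =
     mu * ln (\<Sum>i=1..m. exp (lam i * (- mus i * ln (\<Sum>k=1..K. exp (- f i (xs k) / mus i)) - z i) / mu))"

end

theory Submission
  imports Defs
begin

text \<open>The scalarization is a smooth maximum over the objectives of the weighted, shifted smooth
minima over the K solutions. Both smoothings are monotone, and strictly monotone in every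
argument, so replacing a member of the solution set by a point that is no worse in any objective
does not increase the scalarization, and strictly decreases it when the point is strictly better
in an objective of positive weight. Since the weights sum to one, some weight is positive, which
gives weak Pareto optimality; if all weights are positive, any dominating point would contradict
optimality. For a unique optimal set, replacing every copy of a dominated member by a dominating
point yields another optimal set that no longer contains the member.\<close>

definition smooth_max :: "real \<Rightarrow> 'a set \<Rightarrow> ('a \<Rightarrow> real) \<Rightarrow> real" where
  "smooth_max \<mu> A v = \<mu> * ln (\<Sum>a\<in>A. exp (v a / \<mu>))"

definition smooth_min :: "real \<Rightarrow> 'a set \<Rightarrow> ('a \<Rightarrow> real) \<Rightarrow> real" where
  "smooth_min \<mu> A v = - smooth_max \<mu> A (\<lambda>a. - v a)"

lemma ln_sum_exp_mono:
  fixes u v :: "'a \<Rightarrow> real"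
  assumes "finite A" and "\<And>a. a \<in> A \<Longrightarrow> u a \<le> v a"
  shows "ln (\<Sum>a\<in>A. exp (u a)) \<le> ln (\<Sum>a\<in>A. exp (v a))"
proof (cases "A = {}")
  case False
  have "(\<Sum>a\<in>A. exp (u a)) \<le> (\<Sum>a\<in>A. exp (v a))"
    using assms by (intro sum_mono) simp
  moreover have "(\<Sum>a\<in>A. exp (u a)) > 0"
    using assms False by (intro sum_pos) auto
  ultimately show ?thesis by simp
qed simp

lemma ln_sum_exp_strict_mono:
  fixes u v :: "'a \<Rightarrow> real"
  assumes "finite A" and "\<And>a. a \<in> A \<Longrightarrow> u a \<le> v a" and "b \<in> A" "u b < v b"
  shows "ln (\<Sum>a\<in>A. exp (u a)) < ln (\<Sum>a\<in>A. exp (v a))"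
proof -
  have "(\<Sum>a\<in>A. exp (u a)) < (\<Sum>a\<in>A. exp (v a))"
    by (rule sum_strict_mono_ex1) (use assms in auto)
  moreover have "(\<Sum>a\<in>A. exp (u a)) > 0"
    using assms by (intro sum_pos) auto
  ultimately show ?thesis by simp
qed

lemma smooth_max_mono:
  assumes "\<mu> > 0" "finite A" and "\<And>a. a \<in> A \<Longrightarrow> u a \<le> v a"
  shows "smooth_max \<mu> A u \<le> smooth_max \<mu> A v"
  unfolding smooth_max_def
  using assms by (intro mult_left_mono ln_sum_exp_mono) (auto simp: divide_right_mono)

lemma smooth_max_strict_mono:
  assumes "\<mu> > 0" "finite A" and "\<And>a. a \<in> A \<Longrightarrow> u a \<le> v a" and "b \<in> A" "u b < v b"
  shows "smooth_max \<mu> A u < smooth_max \<mu> A v"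
  unfolding smooth_max_def
  using assms by (intro mult_strict_left_mono ln_sum_exp_strict_mono)
    (auto simp: divide_right_mono divide_strict_right_mono)

lemma smooth_min_mono:
  assumes "\<mu> > 0" "finite A" and "\<And>a. a \<in> A \<Longrightarrow> u a \<le> v a"
  shows "smooth_min \<mu> A u \<le> smooth_min \<mu> A v"
  unfolding smooth_min_def using assms by (simp add: smooth_max_mono)

lemma smooth_min_strict_mono:
  assumes "\<mu> > 0" "finite A" and "\<And>a. a \<in> A \<Longrightarrow> u a \<le> v a" and "b \<in> A" "u b < v b"
  shows "smooth_min \<mu> A u < smooth_min \<mu> A v"
  unfolding smooth_min_def using assms by (simp add: smooth_max_strict_mono)

lemma stch_set_eq_smooth_max_smooth_min:
  "stch_set m K f lam z mu mus xs =
     smooth_max mu {1..m} (\<lambda>i. lam i * (smooth_min (mus i) {1..K} (\<lambda>k. f i (xs k)) - z i))"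
  unfolding stch_set_def smooth_max_def smooth_min_def by simp

lemma stch_set_mono:
  assumes "mu > 0" "\<forall>i\<in>{1..m}. lam i \<ge> 0" "\<forall>i\<in>{1..m}. mus i > 0"
    and "\<forall>i\<in>{1..m}. \<forall>k\<in>{1..K}. f i (ys k) \<le> f i (xs k)"
  shows "stch_set m K f lam z mu mus ys \<le> stch_set m K f lam z mu mus xs"
  unfolding stch_set_eq_smooth_max_smooth_min
  using assms by (intro smooth_max_mono mult_left_mono diff_right_mono smooth_min_mono) auto

lemma stch_set_strict_mono:
  assumes "mu > 0" "\<forall>i\<in>{1..m}. lam i \<ge> 0" "\<forall>i\<in>{1..m}. mus i > 0"
    and "\<forall>i\<in>{1..m}. \<forall>k\<in>{1..K}. f i (ys k) \<le> f i (xs k)"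
    and "i \<in> {1..m}" "lam i > 0" "k \<in> {1..K}" "f i (ys k) < f i (xs k)"
  shows "stch_set m K f lam z mu mus ys < stch_set m K f lam z mu mus xs"
  unfolding stch_set_eq_smooth_max_smooth_min
  using assms
  by (intro smooth_max_strict_mono[where b = i] mult_left_mono mult_strict_left_mono
      diff_right_mono diff_strict_right_mono smooth_min_mono smooth_min_strict_mono[where b = k])
    auto

definition stch_set_minimizer ::
  "'a set \<Rightarrow> nat \<Rightarrow> nat \<Rightarrow> (nat \<Rightarrow> 'a \<Rightarrow> real) \<Rightarrow> (nat \<Rightarrow> real) \<Rightarrow> (nat \<Rightarrow> real) \<Rightarrow> real
   \<Rightarrow> (nat \<Rightarrow> real) \<Rightarrow> (nat \<Rightarrow> 'a) \<Rightarrow> bool" where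
  "stch_set_minimizer X m K f lam z mu mus xs \<longleftrightarrow>
     (\<forall>k\<in>{1..K}. xs k \<in> X) \<and>
     (\<forall>ys. (\<forall>k\<in>{1..K}. ys k \<in> X) \<longrightarrow>
        stch_set m K f lam z mu mus xs \<le> stch_set m K f lam z mu mus ys)"

lemma stch_set_minimizer_mem:
  "stch_set_minimizer X m K f lam z mu mus xs \<Longrightarrow> k \<in> {1..K} \<Longrightarrow> xs k \<in> X"
  by (simp add: stch_set_minimizer_def)

lemma stch_set_minimizer_no_weighted_improvement:
  assumes "mu > 0" "\<forall>i\<in>{1..m}. lam i \<ge> 0" "\<forall>i\<in>{1..m}. mus i > 0"
    and min: "stch_set_minimizer X m K f lam z mu mus xs" and "k \<in> {1..K}"
    and "y \<in> X" "\<forall>i\<in>{1..m}. f i y \<le> f i (xs k)"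
    and "i \<in> {1..m}" "lam i > 0"
  shows "f i (xs k) \<le> f i y"
proof (rule ccontr)
  assume "\<not> f i (xs k) \<le> f i y"
  define ys where "ys = xs(k := y)"
  have "\<forall>k'\<in>{1..K}. ys k' \<in> X"
    using min \<open>y \<in> X\<close> unfolding ys_def stch_set_minimizer_def by auto
  with min have "stch_set m K f lam z mu mus xs \<le> stch_set m K f lam z mu mus ys"
    unfolding stch_set_minimizer_def by blast
  moreover have "stch_set m K f lam z mu mus ys < stch_set m K f lam z mu mus xs"
    using assms \<open>\<not> f i (xs k) \<le> f i y\<close>
    by (intro stch_set_strict_mono[where i = i and k = k]) (auto simp: ys_def)
  ultimately show False by simp
qed

lemma stch_set_minimizer_weakly_pareto_optimal:
  assumes "mu > 0" "\<forall>i\<in>{1..m}. lam i \<ge> 0" "\<forall>i\<in>{1..m}. mus i > 0"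
    and "i \<in> {1..m}" "lam i > 0"
    and min: "stch_set_minimizer X m K f lam z mu mus xs" and "k \<in> {1..K}"
  shows "weakly_pareto_optimal X m f (xs k)"
  unfolding weakly_pareto_optimal_def
proof (intro conjI notI)
  show "xs k \<in> X" using min \<open>k \<in> {1..K}\<close> by (rule stch_set_minimizer_mem)
  assume "\<exists>y\<in>X. strictly_dominates m f y (xs k)"
  then obtain y where "y \<in> X" and y_lt: "\<forall>i\<in>{1..m}. f i y < f i (xs k)"
    unfolding strictly_dominates_def by blast
  have "f i (xs k) \<le> f i y"
    using assms \<open>y \<in> X\<close> y_lt
    by (intro stch_set_minimizer_no_weighted_improvement[OF assms(1-3) min \<open>k \<in> {1..K}\<close>])
      (auto simp: less_imp_le)
  with y_lt \<open>i \<in> {1..m}\<close> show False by fastforce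
qed

lemma stch_set_minimizer_pareto_optimal_if_weights_pos:
  assumes "mu > 0" "\<forall>i\<in>{1..m}. lam i > 0" "\<forall>i\<in>{1..m}. mus i > 0"
    and min: "stch_set_minimizer X m K f lam z mu mus xs" and "k \<in> {1..K}"
  shows "pareto_optimal X m f (xs k)"
  unfolding pareto_optimal_def
proof (intro conjI notI)
  show "xs k \<in> X" using min \<open>k \<in> {1..K}\<close> by (rule stch_set_minimizer_mem)
  assume "\<exists>y\<in>X. dominates m f y (xs k)"
  then obtain y j where "y \<in> X" "\<forall>i\<in>{1..m}. f i y \<le> f i (xs k)"
    and "j \<in> {1..m}" "f j y < f j (xs k)"
    unfolding dominates_def by blast
  moreover have "\<forall>i\<in>{1..m}. lam i \<ge> 0" using assms(2) by (simp add: less_imp_le)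
  ultimately have "f j (xs k) \<le> f j y"
    using assms by (intro stch_set_minimizer_no_weighted_improvement[OF assms(1) _ assms(3) min]) auto
  with \<open>f j y < f j (xs k)\<close> show False by simp
qed

lemma stch_set_minimizer_pareto_optimal_if_unique:
  assumes "mu > 0" "\<forall>i\<in>{1..m}. lam i \<ge> 0" "\<forall>i\<in>{1..m}. mus i > 0"
    and min: "stch_set_minimizer X m K f lam z mu mus xs" and "k \<in> {1..K}"
    and unique: "\<forall>ys. stch_set_minimizer X m K f lam z mu mus ys \<longrightarrow> ys ` {1..K} = xs ` {1..K}"
  shows "pareto_optimal X m f (xs k)"
  unfolding pareto_optimal_def
proof (intro conjI notI)
  show "xs k \<in> X" using min \<open>k \<in> {1..K}\<close> by (rule stch_set_minimizer_mem)
  assume "\<exists>y\<in>X. dominates m f y (xs k)"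
  then obtain y where "y \<in> X" "dominates m f y (xs k)" by blast
  then have y_le: "\<forall>i\<in>{1..m}. f i y \<le> f i (xs k)" and "y \<noteq> xs k"
    unfolding dominates_def by auto
  \<comment> \<open>Replace every copy of xs k, so that xs k leaves the image.\<close>
  define ys where "ys = (\<lambda>k'. if xs k' = xs k then y else xs k')"
  have "\<forall>k'\<in>{1..K}. ys k' \<in> X"
    using min \<open>y \<in> X\<close> unfolding ys_def stch_set_minimizer_def by auto
  moreover have "stch_set m K f lam z mu mus ys \<le> stch_set m K f lam z mu mus xs"
    using assms(1-3) y_le by (intro stch_set_mono) (auto simp: ys_def)
  ultimately have "stch_set_minimizer X m K f lam z mu mus ys"
    using min unfolding stch_set_minimizer_def by force
  with unique have "xs k \<in> ys ` {1..K}" using \<open>k \<in> {1..K}\<close> by blast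
  with \<open>y \<noteq> xs k\<close> show False by (auto simp: ys_def)
qed

theorem theorem2:
  fixes X :: "'a set" and m K :: nat and f :: "nat \<Rightarrow> 'a \<Rightarrow> real"
    and lam z mus :: "nat \<Rightarrow> real" and mu :: real and xs :: "nat \<Rightarrow> 'a"
  assumes K: "K \<ge> 1"
    and lam_nonneg: "\<forall>i\<in>{1..m}. lam i \<ge> 0"
    and lam_sum: "(\<Sum>i=1..m. lam i) = 1"
    and mu_pos: "mu > 0"
    and mus_pos: "\<forall>i\<in>{1..m}. mus i > 0"
    and feasible: "\<forall>k\<in>{1..K}. xs k \<in> X"
    and optimal: "\<forall>ys. (\<forall>k\<in>{1..K}. ys k \<in> X) \<longrightarrow>
                    stch_set m K f lam z mu mus xs \<le> stch_set m K f lam z mu mus ys"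
  shows "(\<forall>k\<in>{1..K}. weakly_pareto_optimal X m f (xs k))
       \<and> (((\<forall>ys. (\<forall>k\<in>{1..K}. ys k \<in> X)
                 \<and> (\<forall>ws. (\<forall>k\<in>{1..K}. ws k \<in> X) \<longrightarrow>
                        stch_set m K f lam z mu mus ys \<le> stch_set m K f lam z mu mus ws)
                 \<longrightarrow> ys ` {1..K} = xs ` {1..K})
           \<or> (\<forall>i\<in>{1..m}. lam i > 0))
          \<longrightarrow> (\<forall>k\<in>{1..K}. pareto_optimal X m f (xs k)))"
proof -
  have min: "stch_set_minimizer X m K f lam z mu mus xs"
    using feasible optimal by (simp add: stch_set_minimizer_def)
  obtain i where i: "i \<in> {1..m}" "lam i > 0"
  proof -
    have "(\<Sum>i=1..m. lam i) \<noteq> 0" using lam_sum by simp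
    then obtain i where "i \<in> {1..m}" "lam i \<noteq> 0"
      using sum.not_neutral_contains_not_neutral by blast
    with lam_nonneg show thesis using that by force
  qed
  show ?thesis
    unfolding stch_set_minimizer_def[symmetric]
    using stch_set_minimizer_weakly_pareto_optimal[OF mu_pos lam_nonneg mus_pos i min]
      stch_set_minimizer_pareto_optimal_if_unique[OF mu_pos lam_nonneg mus_pos min]
      stch_set_minimizer_pareto_optimal_if_weights_pos[OF mu_pos _ mus_pos min]
    by blast
qed

end
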